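(* Let $q$ be a prime power, $k,b$ positive integers, and $\boldsymbol{x},\boldsymbol{y}\in\mathbb{F}_q^k$ with $0<d_b(\boldsymbol{x},\boldsymbol{y})<k$. Then $d_{b+1}(\boldsymbol{x},\boldsymbol{y})\ge d_b(\boldsymbol{x},\boldsymbol{y})+1$.
   Context: For $\boldsymbol{x}=(x_0,\ldots,x_{k-1})$, $\boldsymbol{y}=(y_0,\ldots,y_{k-1})\in\mathbb{F}_q^k$ and a positive integer $c$, the $c$-symbol distance $d_c(\boldsymbol{x},\boldsymbol{y})$ is the number of indices $i\in\{0,\ldots,k-1\}$ with $(x_i,x_{i+1},\ldots,x_{i+c-1})\ne(y_i,y_{i+1},\ldots,y_{i+c-1})$, indices taken modulo $k$. *)

theory Defs
  imports Main
begin

text \<open>Vectors in F_q^k are lists of length k over a finite field type.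
  The c-window of x at position i is the tuple (x_i, ..., x_{i+c-1}), indices mod k.\<close>

definition window :: "'a list \<Rightarrow> nat \<Rightarrow> nat \<Rightarrow> 'a list" where
  "window x c i = map (\<lambda>j. x ! ((i + j) mod length x)) [0..<c]"

definition sym_dist :: "nat \<Rightarrow> 'a list \<Rightarrow> 'a list \<Rightarrow> nat" where
  "sym_dist c x y = card {i. i < length x \<and> window x c i \<noteq> window y c i}"

end

theory Submission
  imports Defs
begin

text \<open>Let \<open>D\<^sub>c\<close> be the set of positions where the \<open>c\<close>-windows of \<open>x\<close> and \<open>y\<close> differ.
  A \<open>(b+1)\<close>-window extends the \<open>b\<close>-window at the same position, so \<open>D\<^sub>b \<subseteq> D\<^sub>b\<^sub>+\<^sub>1\<close>.
  It also extends the \<open>b\<close>-window at the next position, so \<open>i \<in> D\<^sub>b\<^sub>+\<^sub>1\<close> whenever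
  \<open>i + 1 \<in> D\<^sub>b\<close>. As \<open>D\<^sub>b\<close> is a nonempty proper subset of the cyclic index set, some
  \<open>i \<notin> D\<^sub>b\<close> has \<open>i + 1 \<in> D\<^sub>b\<close>, and this \<open>i\<close> makes the inclusion strict.\<close>

lemma window_Suc_snoc:
  "window x (Suc c) i = window x c i @ [x ! ((i + c) mod length x)]"
  by (simp add: window_def)

lemma window_Suc_Cons:
  "window x (Suc c) i = x ! (i mod length x) # window x c (Suc i)"
  unfolding window_def by (simp add: upt_conv_Cons map_Suc_upt[symmetric] del: upt_Suc)

lemma window_mod_length: "window x c (i mod length x) = window x c i"
  by (simp add: window_def mod_add_left_eq)

lemma periodic_pred_switches_on:
  fixes P :: "nat \<Rightarrow> bool"
  assumes "k > 0" and periodic: "\<And>i. P (i mod k) = P i" and "P a" "\<not> P b"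
  shows "\<exists>i. \<not> P i \<and> P (Suc i)"
proof (rule ccontr)
  assume "\<nexists>i. \<not> P i \<and> P (Suc i)"
  then have "\<not> P (b + n)" for n
    using \<open>\<not> P b\<close> by (induction n) auto
  moreover have "b + (a + k * b - b) = a + k * b"
    using \<open>k > 0\<close> by (simp add: trans_le_add2)
  moreover have "P (a + k * b)"
    using periodic[of "a + k * b"] periodic[of a] \<open>P a\<close> by simp
  ultimately show False by metis
qed

theorem proposition2p1:
  fixes x y :: "'a::{finite, field} list" and k b :: nat
  assumes "k > 0" and "b > 0"
    and "length x = k" and "length y = k"
    and "0 < sym_dist b x y" and "sym_dist b x y < k"
  shows "sym_dist (b + 1) x y \<ge> sym_dist b x y + 1"
proof -
  define D where "D c = {i. i < k \<and> window x c i \<noteq> window y c i}" for c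
  have dist: "sym_dist c x y = card (D c)" for c
    using assms(3) by (simp add: sym_dist_def D_def)
  have periodic:
    "window x c (i mod k) = window y c (i mod k) \<longleftrightarrow> window x c i = window y c i" for c i
    by (metis assms(3,4) window_mod_length)
  obtain a where "window x b a \<noteq> window y b a"
    using assms(5) dist[of b] by (fastforce simp: D_def)
  moreover obtain a' where "window x b a' = window y b a'"
    using assms(6) dist[of b] card_mono[of "{..<k}" "D b"] by (fastforce simp: D_def)
  ultimately obtain i where
    agree: "window x b i = window y b i" and
    differ_next: "window x b (Suc i) \<noteq> window y b (Suc i)"
    using periodic_pred_switches_on[OF \<open>k > 0\<close>, of "\<lambda>i. window x b i \<noteq> window y b i"]
      periodic by blast
  from differ_next have "window x (Suc b) i \<noteq> window y (Suc b) i"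
    by (simp add: window_Suc_Cons)
  with agree have "i mod k \<in> D (b + 1) - D b"
    using assms(1) periodic by (simp add: D_def)
  moreover have "D b \<subseteq> D (b + 1)"
    by (auto simp: D_def window_Suc_snoc)
  ultimately have "card (D b) < card (D (b + 1))"
    by (intro psubset_card_mono) (auto simp: D_def)
  then show ?thesis
    by (simp add: dist)
qed

end
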